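(* Let $\Lambda$ be a finite set of sites with a real symmetric hopping matrix $(t_{x,y})$. If the whole lattice $\Lambda$ is connected by exchange bonds (i.e. the graph on $\Lambda$ whose edges are the exchange bonds is connected), then the Hubbard model with $U=\infty$ and $N_e=|\Lambda|-1$ satisfies the connectivity condition.
   Context: A loop of length $m$ is an ordered set $(x_1,\ldots,x_m)$ of distinct sites with $t_{x_i,x_{i+1}}\ne0$ for $i=1,\ldots,m-1$ and $t_{x_m,x_1}\ne0$. A pair $\{x,y\}$ of distinct sites is an exchange bond if $x$ and $y$ both belong to a common loop of length three or four, and the set $\Lambda\setminus\{x,y\}$ remains connected via nonvanishing $t_{u,v}$ (i.e. the graph on $\Lambda\setminus\{x,y\}$ with edges $\{u,v\}$, $t_{u,v}\ne0$, is connected). Connectivity condition: with $N_e=|\Lambda|-1$, a configuration is a pair $(x,\boldsymbol\sigma)$ with $x\in\Lambda$ (the empty site, "hole") and $\boldsymbol\sigma\in\{\uparrow,\downarrow\}^{\Lambda\setminus\{x\}}$ (each other site singly occupied with spin $\sigma_y$). Two configurations are adjacent if one is obtained from the other by moving the electron at a site $z\ne x$ with $t_{x,z}\ne0$ onto the hole $x$ (keeping its spin), $z$ becoming the new hole. The connectivity condition holds if for each fixed value of $\sum_{y\ne x}\sigma_y$ (with $\uparrow=+\frac12,\downarrow=-\frac12$) the graph of configurations with that value and this adjacency is connected. *)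

theory Defs
  imports Complex_Main
begin

definition hop_connected :: "('a \<Rightarrow> 'a \<Rightarrow> real) \<Rightarrow> 'a set \<Rightarrow> bool" where
  "hop_connected t S \<longleftrightarrow>
     (\<forall>u\<in>S. \<forall>v\<in>S. (\<lambda>a b. a \<in> S \<and> b \<in> S \<and> a \<noteq> b \<and> t a b \<noteq> 0)\<^sup>*\<^sup>* u v)"

definition is_loop :: "'a set \<Rightarrow> ('a \<Rightarrow> 'a \<Rightarrow> real) \<Rightarrow> nat \<Rightarrow> 'a list \<Rightarrow> bool" where
  "is_loop \<Lambda> t m xs \<longleftrightarrow> length xs = m \<and> m \<ge> 1 \<and> distinct xs \<and> set xs \<subseteq> \<Lambda> \<and>
     (\<forall>i. Suc i < m \<longrightarrow> t (xs ! i) (xs ! Suc i) \<noteq> 0) \<and>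
     t (xs ! (m - 1)) (xs ! 0) \<noteq> 0"

definition exchange_bond :: "'a set \<Rightarrow> ('a \<Rightarrow> 'a \<Rightarrow> real) \<Rightarrow> 'a \<Rightarrow> 'a \<Rightarrow> bool" where
  "exchange_bond \<Lambda> t x y \<longleftrightarrow> x \<in> \<Lambda> \<and> y \<in> \<Lambda> \<and> x \<noteq> y \<and>
     (\<exists>xs. (is_loop \<Lambda> t 3 xs \<or> is_loop \<Lambda> t 4 xs) \<and> x \<in> set xs \<and> y \<in> set xs) \<and>
     hop_connected t (\<Lambda> - {x, y})"

definition exchange_connected :: "'a set \<Rightarrow> ('a \<Rightarrow> 'a \<Rightarrow> real) \<Rightarrow> bool" where
  "exchange_connected \<Lambda> t \<longleftrightarrow>
     (\<forall>u\<in>\<Lambda>. \<forall>v\<in>\<Lambda>. (\<lambda>a b. exchange_bond \<Lambda> t a b)\<^sup>*\<^sup>* u v)"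

(* configurations (x, sigma): hole at x, spin sigma y for y in Lambda - {x}
   (True = up, False = down); sigma is normalised to False outside Lambda - {x} *)
definition configs :: "'a set \<Rightarrow> ('a \<times> ('a \<Rightarrow> bool)) set" where
  "configs \<Lambda> = {(x, \<sigma>). x \<in> \<Lambda> \<and> (\<forall>z. z \<notin> \<Lambda> - {x} \<longrightarrow> \<sigma> z = False)}"

definition total_Sz :: "'a set \<Rightarrow> 'a \<times> ('a \<Rightarrow> bool) \<Rightarrow> real" where
  "total_Sz \<Lambda> c = (\<Sum>y\<in>\<Lambda> - {fst c}. if snd c y then 1/2 else - 1/2)"

(* the electron at z (t x z ~= 0) hops onto the hole x, keeping its spin *)
definition hop_move :: "'a set \<Rightarrow> ('a \<Rightarrow> 'a \<Rightarrow> real) \<Rightarrow>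
    'a \<times> ('a \<Rightarrow> bool) \<Rightarrow> 'a \<times> ('a \<Rightarrow> bool) \<Rightarrow> bool" where
  "hop_move \<Lambda> t c c' \<longleftrightarrow> c \<in> configs \<Lambda> \<and>
     (\<exists>z\<in>\<Lambda>. z \<noteq> fst c \<and> t (fst c) z \<noteq> 0 \<and>
        c' = (z, (snd c)(fst c := snd c z, z := False)))"

definition config_adjacent :: "'a set \<Rightarrow> ('a \<Rightarrow> 'a \<Rightarrow> real) \<Rightarrow>
    'a \<times> ('a \<Rightarrow> bool) \<Rightarrow> 'a \<times> ('a \<Rightarrow> bool) \<Rightarrow> bool" where
  "config_adjacent \<Lambda> t c c' \<longleftrightarrow> hop_move \<Lambda> t c c' \<or> hop_move \<Lambda> t c' c"

definition connectivity_condition :: "'a set \<Rightarrow> ('a \<Rightarrow> 'a \<Rightarrow> real) \<Rightarrow> bool" where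
  "connectivity_condition \<Lambda> t \<longleftrightarrow>
     (\<forall>c\<in>configs \<Lambda>. \<forall>c'\<in>configs \<Lambda>. total_Sz \<Lambda> c = total_Sz \<Lambda> c' \<longrightarrow>
        (\<lambda>a b. config_adjacent \<Lambda> t a b \<and> total_Sz \<Lambda> a = total_Sz \<Lambda> c
               \<and> total_Sz \<Lambda> b = total_Sz \<Lambda> c)\<^sup>*\<^sup>* c c')"

end

theory Submission
  imports Defs
begin

(* Hops conserve the total S^z, and since every exchange bond lies on a loop the hopping
   graph is connected, so the hole can be parked at any site h. It then suffices to realise
   every transposition of two spins away from h, as transpositions act transitively on spin
   configurations of fixed weight.
   Taking the hole once around a triangle exchanges the other two spins; taking it twice
   around a square rotates the other three, and as spins are Boolean this yields every
   transposition among them. For an exchange bond {x, y}, walking the hole from h to such a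
   loop inside the connected set Lambda - {x, y} and back conjugates the loop move into the
   exchange of x and y. A bond containing h is traded for one at a neighbour w of h by first
   letting the electron at w hop onto h. Composing along chains of bonds gives all
   transpositions. *)

lemma rtranclp_imp_successively:
  assumes "R\<^sup>*\<^sup>* a b"
  obtains xs where "successively R (a # xs)" "last (a # xs) = b"
  using assms
proof (induction arbitrary: thesis rule: rtranclp_induct)
  case base
  then show ?case by (metis last.simps successively.simps(2))
next
  case (step b c)
  then obtain xs where "successively R (a # xs)" "last (a # xs) = b" by blast
  with step.hyps(2) have "successively R ((a # xs) @ [c])"
    by (simp add: successively_append_iff del: append_Cons)
  with step.prems show ?case by (metis append_Cons last_snoc)
qed

lemma successively_imp_rtranclp:
  assumes "successively R (a # xs)" "b \<in> set (a # xs)"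
  shows "R\<^sup>*\<^sup>* a b"
  using assms
proof (induction xs arbitrary: a)
  case (Cons x xs)
  then show ?case by (auto intro: converse_rtranclp_into_rtranclp)
qed simp

definition hop_edge :: "('a \<Rightarrow> 'a \<Rightarrow> real) \<Rightarrow> 'a set \<Rightarrow> 'a \<Rightarrow> 'a \<Rightarrow> bool" where
  [simp]: "hop_edge t S a b \<longleftrightarrow> a \<in> S \<and> b \<in> S \<and> a \<noteq> b \<and> t a b \<noteq> 0"

lemma hop_connected_iff: "hop_connected t S \<longleftrightarrow> (\<forall>u\<in>S. \<forall>v\<in>S. (hop_edge t S)\<^sup>*\<^sup>* u v)"
  unfolding hop_connected_def hop_edge_def[abs_def] ..

lemma successively_hop_edge_subset:
  "successively (hop_edge t S) (a # xs) \<Longrightarrow> set xs \<subseteq> S"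
  by (induction xs arbitrary: a) auto

abbreviation config_reachable :: "'a set \<Rightarrow> ('a \<Rightarrow> 'a \<Rightarrow> real) \<Rightarrow>
    'a \<times> ('a \<Rightarrow> bool) \<Rightarrow> 'a \<times> ('a \<Rightarrow> bool) \<Rightarrow> bool" where
  "config_reachable \<Lambda> t \<equiv> (config_adjacent \<Lambda> t)\<^sup>*\<^sup>*"

lemma hop_configs:
  assumes "(h, \<sigma>) \<in> configs \<Lambda>" "z \<in> \<Lambda>" "z \<noteq> h"
  shows "(z, \<sigma>(h := \<sigma> z, z := False)) \<in> configs \<Lambda>"
  using assms by (auto simp: configs_def)

lemma config_adjacent_hopI:
  assumes "(h, \<sigma>) \<in> configs \<Lambda>" "hop_edge t \<Lambda> h z"
  shows "config_adjacent \<Lambda> t (h, \<sigma>) (z, \<sigma>(h := \<sigma> z, z := False))"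
  using assms by (auto simp: config_adjacent_def hop_move_def)

lemma total_Sz_hop:
  assumes "finite \<Lambda>" "(h, \<sigma>) \<in> configs \<Lambda>" "z \<in> \<Lambda>" "z \<noteq> h"
  shows "total_Sz \<Lambda> (z, \<sigma>(h := \<sigma> z, z := False)) = total_Sz \<Lambda> (h, \<sigma>)"
proof -
  have "h \<in> \<Lambda>" using assms(2) by (simp add: configs_def)
  let ?spin = "\<lambda>\<tau> y. if \<tau> y then 1/2 else - 1/2 :: real"
  let ?\<sigma>' = "\<sigma>(h := \<sigma> z, z := False)"
  have "total_Sz \<Lambda> (z, ?\<sigma>') = ?spin ?\<sigma>' h + (\<Sum>y\<in>\<Lambda> - {z} - {h}. ?spin ?\<sigma>' y)"
    unfolding total_Sz_def using assms \<open>h \<in> \<Lambda>\<close> by (simp add: sum.remove[of _ h])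
  also have "(\<Sum>y\<in>\<Lambda> - {z} - {h}. ?spin ?\<sigma>' y) = (\<Sum>y\<in>\<Lambda> - {h} - {z}. ?spin \<sigma> y)"
    by (intro sum.cong) auto
  also have "?spin ?\<sigma>' h + (\<Sum>y\<in>\<Lambda> - {h} - {z}. ?spin \<sigma> y) = total_Sz \<Lambda> (h, \<sigma>)"
    unfolding total_Sz_def using assms \<open>h \<in> \<Lambda>\<close> by (simp add: sum.remove[of _ z])
  finally show ?thesis .
qed

lemma total_Sz_eq_card:
  assumes "finite \<Lambda>"
  shows "total_Sz \<Lambda> (h, \<sigma>) = real (card {y \<in> \<Lambda> - {h}. \<sigma> y}) - real (card (\<Lambda> - {h})) / 2"
proof -
  have "total_Sz \<Lambda> (h, \<sigma>) = (\<Sum>y\<in>\<Lambda> - {h}. (if \<sigma> y then 1 else 0) - 1/2)"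
    unfolding total_Sz_def by (intro sum.cong) auto
  also have "\<dots> = (\<Sum>y\<in>\<Lambda> - {h}. if \<sigma> y then 1 else 0) - real (card (\<Lambda> - {h})) / 2"
    by (simp add: sum_subtractf)
  also have "(\<Sum>y\<in>\<Lambda> - {h}. if \<sigma> y then 1 else 0 :: real) = real (card {y \<in> \<Lambda> - {h}. \<sigma> y})"
    using assms by (simp add: sum.If_cases Int_def conj_commute)
  finally show ?thesis .
qed

lemma config_adjacent_sym: "config_adjacent \<Lambda> t c d \<Longrightarrow> config_adjacent \<Lambda> t d c"
  by (auto simp: config_adjacent_def)

lemma hop_moveE:
  assumes "hop_move \<Lambda> t c d"
  obtains h \<sigma> z where "c = (h, \<sigma>)" "(h, \<sigma>) \<in> configs \<Lambda>" "hop_edge t \<Lambda> h z"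
    "d = (z, \<sigma>(h := \<sigma> z, z := False))"
proof -
  obtain h \<sigma> where c: "c = (h, \<sigma>)" by fastforce
  with assms have "h \<in> \<Lambda>" by (simp add: hop_move_def configs_def)
  with assms c that show thesis by (auto simp: hop_move_def)
qed

lemma config_adjacent_configs:
  assumes "config_adjacent \<Lambda> t c d"
  shows "c \<in> configs \<Lambda>" "d \<in> configs \<Lambda>"
  using assms unfolding config_adjacent_def by (auto elim!: hop_moveE intro: hop_configs)

lemma config_adjacent_total_Sz:
  assumes "finite \<Lambda>" "config_adjacent \<Lambda> t c d"
  shows "total_Sz \<Lambda> c = total_Sz \<Lambda> d"
  using assms(2) unfolding config_adjacent_def
  by (auto elim!: hop_moveE simp: total_Sz_hop[OF assms(1)])

lemma config_reachable_configs:
  "config_reachable \<Lambda> t c d \<Longrightarrow> c \<in> configs \<Lambda> \<Longrightarrow> d \<in> configs \<Lambda>"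
  by (induction rule: rtranclp_induct) (auto dest: config_adjacent_configs)

lemma config_reachable_total_Sz:
  assumes "finite \<Lambda>" "config_reachable \<Lambda> t c d"
  shows "total_Sz \<Lambda> d = total_Sz \<Lambda> c"
  using assms(2) by induction (simp_all add: config_adjacent_total_Sz[OF assms(1)])

lemma config_reachable_sym: "config_reachable \<Lambda> t c d \<Longrightarrow> config_reachable \<Lambda> t d c"
  using symp_rtranclp[OF sympI[OF config_adjacent_sym]] by (rule sympD)

lemma config_reachable_in_sector:
  assumes "finite \<Lambda>" "config_reachable \<Lambda> t c d"
  shows "(\<lambda>a b. config_adjacent \<Lambda> t a b \<and> total_Sz \<Lambda> a = total_Sz \<Lambda> c
           \<and> total_Sz \<Lambda> b = total_Sz \<Lambda> c)\<^sup>*\<^sup>* c d"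
  using assms(2)
proof induction
  case (step d e)
  have "total_Sz \<Lambda> d = total_Sz \<Lambda> c" "total_Sz \<Lambda> e = total_Sz \<Lambda> d"
    using config_reachable_total_Sz[OF assms(1) step.hyps(1)]
      config_adjacent_total_Sz[OF assms(1) step.hyps(2)] by simp_all
  with step show ?case by (simp add: rtranclp.rtrancl_into_rtrancl)
qed simp

fun hole_walk :: "('a \<Rightarrow> bool) \<Rightarrow> 'a list \<Rightarrow> 'a \<Rightarrow> bool" where
  "hole_walk \<sigma> (x # y # ys) = hole_walk (\<sigma>(x := \<sigma> y, y := False)) (y # ys)"
| "hole_walk \<sigma> _ = \<sigma>"

lemma config_reachable_hole_walk:
  assumes "successively (hop_edge t \<Lambda>) (x # xs)" "(x, \<sigma>) \<in> configs \<Lambda>"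
  shows "config_reachable \<Lambda> t (x, \<sigma>) (last (x # xs), hole_walk \<sigma> (x # xs))"
  using assms
proof (induction xs arbitrary: x \<sigma>)
  case (Cons y ys)
  define \<sigma>' where "\<sigma>' = \<sigma>(x := \<sigma> y, y := False)"
  have "config_adjacent \<Lambda> t (x, \<sigma>) (y, \<sigma>')" "(y, \<sigma>') \<in> configs \<Lambda>"
    using Cons.prems unfolding \<sigma>'_def by (auto intro: config_adjacent_hopI hop_configs)
  moreover have "config_reachable \<Lambda> t (y, \<sigma>') (last (y # ys), hole_walk \<sigma>' (y # ys))"
    using Cons calculation(2) by simp
  moreover have "hole_walk \<sigma> (x # y # ys) = hole_walk \<sigma>' (y # ys)"
    by (simp add: \<sigma>'_def)
  ultimately show ?case by (auto intro: converse_rtranclp_into_rtranclp)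
qed simp

definition swap_spins :: "('a \<Rightarrow> bool) \<Rightarrow> 'a \<Rightarrow> 'a \<Rightarrow> 'a \<Rightarrow> bool" where
  "swap_spins \<sigma> u v = \<sigma>(u := \<sigma> v, v := \<sigma> u)"

lemma swap_spins_commute: "swap_spins \<sigma> u v = swap_spins \<sigma> v u"
  by (auto simp: swap_spins_def fun_eq_iff)

lemma swap_spins_configs:
  assumes "(h, \<sigma>) \<in> configs \<Lambda>" "u \<in> \<Lambda> - {h}" "v \<in> \<Lambda> - {h}"
  shows "(h, swap_spins \<sigma> u v) \<in> configs \<Lambda>"
  using assms by (auto simp: configs_def swap_spins_def)

lemma hole_walk_swap_spins:
  assumes "u \<notin> set xs" "v \<notin> set xs"
  shows "hole_walk (swap_spins \<sigma> u v) xs = swap_spins (hole_walk \<sigma> xs) u v"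
  using assms
proof (induction \<sigma> xs rule: hole_walk.induct)
  case (1 \<sigma> x y ys)
  define \<sigma>' where "\<sigma>' = \<sigma>(x := \<sigma> y, y := False)"
  have walk: "hole_walk \<tau> (x # y # ys) = hole_walk (\<tau>(x := \<tau> y, y := False)) (y # ys)" for \<tau>
    by (simp only: hole_walk.simps(1))
  have "(swap_spins \<sigma> u v)(x := swap_spins \<sigma> u v y, y := False) = swap_spins \<sigma>' u v"
    using "1.prems" by (auto simp: \<sigma>'_def swap_spins_def fun_eq_iff)
  then have "hole_walk (swap_spins \<sigma> u v) (x # y # ys) = hole_walk (swap_spins \<sigma>' u v) (y # ys)"
    by (simp only: walk)
  also have "\<dots> = swap_spins (hole_walk \<sigma>' (y # ys)) u v"
    using "1.IH"[folded \<sigma>'_def] "1.prems" by simp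
  finally show ?case by (simp only: walk \<sigma>'_def)
qed simp_all

lemma is_loop_iff_closed_walk:
  "is_loop \<Lambda> t m xs \<longleftrightarrow> length xs = m \<and> m \<ge> 1 \<and> distinct xs \<and> set xs \<subseteq> \<Lambda> \<and>
     successively (\<lambda>a b. t a b \<noteq> 0) (xs @ [hd xs])"
proof (cases "xs = []")
  case False
  then show ?thesis
    unfolding is_loop_def successively_append_iff successively_conv_nth[of _ xs]
    by (auto simp: last_conv_nth hd_conv_nth)
qed (auto simp: is_loop_def)

lemma is_loop_rotate1: "is_loop \<Lambda> t m xs \<Longrightarrow> is_loop \<Lambda> t m (rotate1 xs)"
  by (cases xs) (auto simp: is_loop_iff_closed_walk successively_append_iff successively_Cons)

lemma is_loop_rotate: "is_loop \<Lambda> t m xs \<Longrightarrow> is_loop \<Lambda> t m (rotate k xs)"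
  by (induction k) (simp_all add: is_loop_rotate1)

lemma is_loop_rotate_to:
  assumes "is_loop \<Lambda> t m xs" "w \<in> set xs"
  obtains ys where "is_loop \<Lambda> t m (w # ys)" "set ys = set xs - {w}"
proof -
  obtain us vs where xs: "xs = us @ w # vs" using split_list[OF assms(2)] by blast
  have "is_loop \<Lambda> t m (w # vs @ us)"
    using is_loop_rotate[OF assms(1), of "length us"] by (simp add: xs rotate_append)
  moreover have "set (vs @ us) = set xs - {w}"
    using assms(1) by (auto simp: xs is_loop_def)
  ultimately show thesis using that by blast
qed

lemma is_loop_closed_hop_walk:
  assumes "is_loop \<Lambda> t m xs" "m \<ge> 2"
  shows "successively (hop_edge t \<Lambda>) (xs @ [hd xs])"
proof -
  have xs: "length xs = m" "distinct xs" "set xs \<subseteq> \<Lambda>"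
    using assms(1) by (auto simp: is_loop_def)
  have site: "xs ! k \<in> \<Lambda>" if "k < m" for k
  proof -
    have "xs ! k \<in> set xs" using that xs(1) by simp
    then show ?thesis using xs(3) by blast
  qed
  have "successively (hop_edge t \<Lambda>) xs"
    unfolding successively_conv_nth
  proof (intro allI impI)
    fix i assume i: "Suc i < length xs"
    then have "xs ! i \<noteq> xs ! Suc i" using xs(2) by (simp add: nth_eq_iff_index_eq)
    then show "hop_edge t \<Lambda> (xs ! i) (xs ! Suc i)"
      using assms(1) i xs(1) site[of i] site[of "Suc i"] by (simp add: is_loop_def)
  qed
  moreover have "hop_edge t \<Lambda> (last xs) (hd xs)"
  proof -
    have "xs \<noteq> []" using xs(1) assms(2) by auto
    then have "last xs = xs ! (m - 1)" "hd xs = xs ! 0"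
      using xs(1) by (simp_all add: last_conv_nth hd_conv_nth)
    moreover have "xs ! (m - 1) \<noteq> xs ! 0"
      using xs assms(2) by (simp add: nth_eq_iff_index_eq)
    moreover have "xs ! (m - 1) \<in> \<Lambda>" "xs ! 0 \<in> \<Lambda>"
      using assms(2) site by simp_all
    ultimately show ?thesis using assms(1) by (simp add: is_loop_def)
  qed
  ultimately show ?thesis
    using successively_append_iff[of "hop_edge t \<Lambda>" xs "[hd xs]"] by simp
qed

definition spins_swappable :: "'a set \<Rightarrow> ('a \<Rightarrow> 'a \<Rightarrow> real) \<Rightarrow> 'a \<Rightarrow> 'a \<Rightarrow> 'a \<Rightarrow> bool" where
  "spins_swappable \<Lambda> t h u v \<longleftrightarrow>
     (\<forall>\<sigma>. (h, \<sigma>) \<in> configs \<Lambda> \<longrightarrow> config_reachable \<Lambda> t (h, \<sigma>) (h, swap_spins \<sigma> u v))"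

lemma spins_swappable_refl: "spins_swappable \<Lambda> t h u u"
  by (simp add: spins_swappable_def swap_spins_def)

lemma spins_swappable_commute: "spins_swappable \<Lambda> t h u v \<longleftrightarrow> spins_swappable \<Lambda> t h v u"
  by (simp add: spins_swappable_def swap_spins_commute)

lemma spins_swappable_trans:
  assumes "spins_swappable \<Lambda> t h u v" "spins_swappable \<Lambda> t h v w"
  shows "spins_swappable \<Lambda> t h u w"
proof (cases "u = w \<or> v = w")
  case True
  then show ?thesis using assms(1) spins_swappable_refl by auto
next
  case False
  show ?thesis
    unfolding spins_swappable_def
  proof (intro allI impI)
    fix \<sigma> assume \<sigma>: "(h, \<sigma>) \<in> configs \<Lambda>"
    define \<sigma>\<^sub>1 where "\<sigma>\<^sub>1 = swap_spins \<sigma> u v"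
    define \<sigma>\<^sub>2 where "\<sigma>\<^sub>2 = swap_spins \<sigma>\<^sub>1 v w"
    have r1: "config_reachable \<Lambda> t (h, \<sigma>) (h, \<sigma>\<^sub>1)"
      using assms(1) \<sigma> unfolding spins_swappable_def \<sigma>\<^sub>1_def by blast
    then have r2: "config_reachable \<Lambda> t (h, \<sigma>\<^sub>1) (h, \<sigma>\<^sub>2)"
      using assms(2) \<sigma> config_reachable_configs unfolding spins_swappable_def \<sigma>\<^sub>2_def by blast
    then have r3: "config_reachable \<Lambda> t (h, \<sigma>\<^sub>2) (h, swap_spins \<sigma>\<^sub>2 u v)"
      using assms(1) \<sigma> r1 config_reachable_configs unfolding spins_swappable_def by blast
    have "swap_spins \<sigma>\<^sub>2 u v = swap_spins \<sigma> u w"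
      using False by (auto simp: \<sigma>\<^sub>2_def \<sigma>\<^sub>1_def swap_spins_def fun_eq_iff)
    then show "config_reachable \<Lambda> t (h, \<sigma>) (h, swap_spins \<sigma> u w)"
      using r1 r2 r3 by (metis rtranclp_trans)
  qed
qed

lemma config_reachable_around_loop:
  assumes "is_loop \<Lambda> t m (w # ys)" "m \<ge> 2" "(w, \<sigma>) \<in> configs \<Lambda>"
  shows "config_reachable \<Lambda> t (w, \<sigma>) (w, hole_walk \<sigma> (w # ys @ [w]))"
  using config_reachable_hole_walk[OF _ assms(3), of t "ys @ [w]"] is_loop_closed_hop_walk[OF assms(1,2)]
  by simp

lemma spins_swappable_triangle:
  assumes "is_loop \<Lambda> t 3 [w, p, q]" "x \<in> {p, q}" "y \<in> {p, q}"
  shows "spins_swappable \<Lambda> t w x y"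
  unfolding spins_swappable_def
proof (intro allI impI)
  fix \<sigma> assume \<sigma>: "(w, \<sigma>) \<in> configs \<Lambda>"
  have "config_reachable \<Lambda> t (w, \<sigma>) (w, hole_walk \<sigma> [w, p, q, w])"
    using config_reachable_around_loop[OF assms(1) _ \<sigma>] by simp
  moreover have "hole_walk \<sigma> [w, p, q, w] = swap_spins \<sigma> p q"
    using \<sigma> assms(1) by (auto simp: configs_def is_loop_def swap_spins_def fun_eq_iff)
  moreover have "swap_spins \<sigma> x y \<in> {\<sigma>, swap_spins \<sigma> p q}"
    using assms(2,3) by (auto simp: swap_spins_def fun_eq_iff)
  ultimately show "config_reachable \<Lambda> t (w, \<sigma>) (w, swap_spins \<sigma> x y)" by auto
qed

lemma spins_swappable_square:
  assumes "is_loop \<Lambda> t 4 [w, p, q, r]" "x \<in> {p, q, r}" "y \<in> {p, q, r}"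
  shows "spins_swappable \<Lambda> t w x y"
  unfolding spins_swappable_def
proof (intro allI impI)
  fix \<sigma> assume \<sigma>: "(w, \<sigma>) \<in> configs \<Lambda>"
  define rotate_spins :: "('a \<Rightarrow> bool) \<Rightarrow> 'a \<Rightarrow> bool"
    where "rotate_spins \<tau> = \<tau>(p := \<tau> q, q := \<tau> r, r := \<tau> p)" for \<tau>
  have distinct: "distinct [w, p, q, r]" using assms(1) by (simp add: is_loop_def)
  have rotation: "config_reachable \<Lambda> t (w, \<tau>) (w, rotate_spins \<tau>)"
    if "(w, \<tau>) \<in> configs \<Lambda>" for \<tau>
  proof -
    have "hole_walk \<tau> [w, p, q, r, w] = rotate_spins \<tau>"
      using that distinct by (auto simp: configs_def rotate_spins_def fun_eq_iff)
    then show ?thesis using config_reachable_around_loop[OF assms(1) _ that] by simp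
  qed
  have "config_reachable \<Lambda> t (w, \<sigma>) (w, rotate_spins (rotate_spins \<sigma>))"
    using rotation[OF \<sigma>] rotation[OF config_reachable_configs[OF rotation[OF \<sigma>] \<sigma>]]
    by (rule rtranclp_trans)
  moreover
  txt \<open>Two of the three spins at p, q, r agree, so exchanging any two of them has the
    same effect as a power of the rotation.\<close>
  have "swap_spins \<sigma> x y \<in> {\<sigma>, rotate_spins \<sigma>, rotate_spins (rotate_spins \<sigma>)}"
    using assms(2,3) distinct unfolding rotate_spins_def swap_spins_def
    by (cases "\<sigma> p"; cases "\<sigma> q"; cases "\<sigma> r") (auto simp: fun_eq_iff)
  ultimately show "config_reachable \<Lambda> t (w, \<sigma>) (w, swap_spins \<sigma> x y)"
    using rotation[OF \<sigma>] by auto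
qed

lemma exchange_bond_sym: "exchange_bond \<Lambda> t x y \<Longrightarrow> exchange_bond \<Lambda> t y x"
  unfolding exchange_bond_def by (simp only: insert_commute[of y x]) blast

lemma exchange_bond_swappable_on_loop:
  assumes "exchange_bond \<Lambda> t x y"
  shows "\<exists>w \<in> \<Lambda> - {x, y}. spins_swappable \<Lambda> t w x y"
proof -
  obtain m xs where m: "m = 3 \<or> m = 4" and loop: "is_loop \<Lambda> t m xs"
    and xy: "x \<in> set xs" "y \<in> set xs"
    using assms unfolding exchange_bond_def by blast
  have "\<not> set xs \<subseteq> {x, y}"
  proof
    assume "set xs \<subseteq> {x, y}"
    then have "card (set xs) \<le> card {x, y}" by (intro card_mono) auto
    also have "\<dots> \<le> 2" by (simp add: card_insert_if)
    finally show False using loop m by (auto simp: is_loop_def distinct_card)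
  qed
  then obtain w where w: "w \<in> set xs" "w \<notin> {x, y}" by blast
  obtain ys where ys: "is_loop \<Lambda> t m (w # ys)" "set ys = set xs - {w}"
    using is_loop_rotate_to[OF loop w(1)] by blast
  have "x \<in> set ys" "y \<in> set ys" using xy w ys(2) by auto
  from m have "spins_swappable \<Lambda> t w x y"
  proof
    assume "m = 3"
    then obtain p q where "ys = [p, q]"
      using ys(1) by (auto simp: is_loop_def numeral_eq_Suc length_Suc_conv)
    then show ?thesis
      using spins_swappable_triangle ys(1) \<open>m = 3\<close> \<open>x \<in> set ys\<close> \<open>y \<in> set ys\<close> by simp
  next
    assume "m = 4"
    then obtain p q r where "ys = [p, q, r]"
      using ys(1) by (auto simp: is_loop_def numeral_eq_Suc length_Suc_conv)
    then show ?thesis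
      using spins_swappable_square ys(1) \<open>m = 4\<close> \<open>x \<in> set ys\<close> \<open>y \<in> set ys\<close> by simp
  qed
  moreover have "w \<in> \<Lambda>" using loop w(1) by (auto simp: is_loop_def)
  ultimately show ?thesis using w(2) by blast
qed

lemma exchange_bond_swappable:
  assumes "exchange_bond \<Lambda> t x y" "h \<notin> {x, y}"
  shows "spins_swappable \<Lambda> t h x y"
  unfolding spins_swappable_def
proof (intro allI impI)
  fix \<sigma> assume \<sigma>: "(h, \<sigma>) \<in> configs \<Lambda>"
  obtain w where w: "w \<in> \<Lambda> - {x, y}" "spins_swappable \<Lambda> t w x y"
    using exchange_bond_swappable_on_loop[OF assms(1)] by blast
  have xy: "x \<in> \<Lambda>" "y \<in> \<Lambda>" and "hop_connected t (\<Lambda> - {x, y})"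
    using assms(1) by (auto simp: exchange_bond_def)
  moreover have "h \<in> \<Lambda>" using \<sigma> by (simp add: configs_def)
  ultimately have "(hop_edge t (\<Lambda> - {x, y}))\<^sup>*\<^sup>* h w"
    using w(1) assms(2) unfolding hop_connected_iff by blast
  then obtain xs where walk: "successively (hop_edge t (\<Lambda> - {x, y})) (h # xs)"
    and walk_end: "last (h # xs) = w"
    by (rule rtranclp_imp_successively)
  have avoids: "x \<notin> set (h # xs)" "y \<notin> set (h # xs)"
    using successively_hop_edge_subset[OF walk] assms(2) by auto
  have walk_\<Lambda>: "successively (hop_edge t \<Lambda>) (h # xs)"
    using walk by (rule successively_mono) auto
  txt \<open>The hole walk avoids x and y, hence commutes with their exchange.\<close>
  define \<tau> where "\<tau> = hole_walk \<sigma> (h # xs)"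
  have there: "config_reachable \<Lambda> t (h, \<sigma>) (w, \<tau>)"
    using config_reachable_hole_walk[OF walk_\<Lambda> \<sigma>] walk_end by (simp add: \<tau>_def)
  then have "config_reachable \<Lambda> t (w, \<tau>) (w, swap_spins \<tau> x y)"
    using w(2) config_reachable_configs[OF there \<sigma>] by (simp add: spins_swappable_def)
  moreover have "config_reachable \<Lambda> t (h, swap_spins \<sigma> x y) (w, swap_spins \<tau> x y)"
  proof -
    have "(h, swap_spins \<sigma> x y) \<in> configs \<Lambda>"
      using swap_spins_configs[OF \<sigma>] xy assms(2) by auto
    from config_reachable_hole_walk[OF walk_\<Lambda> this] show ?thesis
      unfolding walk_end hole_walk_swap_spins[OF avoids] \<tau>_def .
  qed
  ultimately show "config_reachable \<Lambda> t (h, \<sigma>) (h, swap_spins \<sigma> x y)"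
    using there config_reachable_sym by (metis rtranclp_trans)
qed

lemma spins_swappable_via_neighbour:
  assumes "hop_edge t \<Lambda> h w" "exchange_bond \<Lambda> t h b"
  shows "spins_swappable \<Lambda> t h w b"
proof (cases "b = w")
  case True
  then show ?thesis by (simp add: spins_swappable_refl)
next
  case False
  have b: "b \<in> \<Lambda>" "b \<noteq> h" using assms(2) by (auto simp: exchange_bond_def)
  show ?thesis
    unfolding spins_swappable_def
  proof (intro allI impI)
    fix \<sigma> assume \<sigma>: "(h, \<sigma>) \<in> configs \<Lambda>"
    txt \<open>The electron at w hops onto the hole h, is exchanged there with the one at b
      (the hole now sits at w, off the bond), and hops back.\<close>
    define \<sigma>\<^sub>1 where "\<sigma>\<^sub>1 = \<sigma>(h := \<sigma> w, w := False)"
    have hop: "config_adjacent \<Lambda> t (h, \<sigma>) (w, \<sigma>\<^sub>1)" "(w, \<sigma>\<^sub>1) \<in> configs \<Lambda>"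
      using config_adjacent_hopI[OF \<sigma> assms(1)] hop_configs[OF \<sigma>] assms(1)
      by (auto simp: \<sigma>\<^sub>1_def)
    have "config_reachable \<Lambda> t (w, \<sigma>\<^sub>1) (w, swap_spins \<sigma>\<^sub>1 h b)"
      using exchange_bond_swappable[OF assms(2), of w] hop(2) False assms(1)
      unfolding spins_swappable_def by auto
    moreover have "config_adjacent \<Lambda> t (h, swap_spins \<sigma> w b) (w, swap_spins \<sigma>\<^sub>1 h b)"
    proof -
      have "(swap_spins \<sigma> w b)(h := swap_spins \<sigma> w b w, w := False) = swap_spins \<sigma>\<^sub>1 h b"
        using \<sigma> False b assms(1) by (auto simp: \<sigma>\<^sub>1_def swap_spins_def configs_def fun_eq_iff)
      moreover have "(h, swap_spins \<sigma> w b) \<in> configs \<Lambda>"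
        using swap_spins_configs[OF \<sigma>, of w b] assms(1) b by auto
      ultimately show ?thesis using config_adjacent_hopI[OF _ assms(1)] by metis
    qed
    ultimately show "config_reachable \<Lambda> t (h, \<sigma>) (h, swap_spins \<sigma> w b)"
      using hop(1) config_adjacent_sym
      by (meson converse_rtranclp_into_rtranclp rtranclp.rtrancl_into_rtrancl)
  qed
qed

lemma exchange_bond_hop_reachable:
  assumes "exchange_bond \<Lambda> t x y"
  shows "(hop_edge t \<Lambda>)\<^sup>*\<^sup>* x y"
proof -
  obtain m xs where m: "m = 3 \<or> m = 4" and loop: "is_loop \<Lambda> t m xs"
    and xy: "x \<in> set xs" "y \<in> set xs"
    using assms unfolding exchange_bond_def by blast
  obtain ys where ys: "is_loop \<Lambda> t m (x # ys)" "set ys = set xs - {x}"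
    using is_loop_rotate_to[OF loop xy(1)] by blast
  have "successively (hop_edge t \<Lambda>) ((x # ys) @ [x])"
    using is_loop_closed_hop_walk[OF ys(1)] m by auto
  then have "successively (hop_edge t \<Lambda>) (x # ys)"
    by (simp only: successively_append_iff)
  moreover have "y \<in> set (x # ys)" using xy ys(2) by auto
  ultimately show ?thesis by (rule successively_imp_rtranclp)
qed

lemma exchange_connected_hop_connected:
  assumes "exchange_connected \<Lambda> t"
  shows "hop_connected t \<Lambda>"
proof -
  have "(\<lambda>a b. exchange_bond \<Lambda> t a b)\<^sup>*\<^sup>* \<le> ((hop_edge t \<Lambda>)\<^sup>*\<^sup>*)\<^sup>*\<^sup>*"
    by (intro rtranclp_mono) (auto intro: exchange_bond_hop_reachable)
  then show ?thesis
    using assms unfolding exchange_connected_def hop_connected_iff by auto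
qed

lemma exchange_connected_spins_swappable:
  assumes "exchange_connected \<Lambda> t" "h \<in> \<Lambda>" "u \<in> \<Lambda> - {h}" "v \<in> \<Lambda> - {h}"
  shows "spins_swappable \<Lambda> t h u v"
proof -
  have "(hop_edge t \<Lambda>)\<^sup>*\<^sup>* h u"
    using exchange_connected_hop_connected[OF assms(1)] assms(2,3)
    unfolding hop_connected_iff by blast
  then obtain w where w: "hop_edge t \<Lambda> h w"
    using assms(3) by (blast elim: converse_rtranclpE)
  txt \<open>Bonds at the hole itself are traded for bonds at its neighbour w.\<close>
  define relabel where "relabel x = (if x = h then w else x)" for x
  have bond: "spins_swappable \<Lambda> t h (relabel a) (relabel b)" if ab: "exchange_bond \<Lambda> t a b" for a b
  proof -
    have "a \<noteq> b" using ab by (simp add: exchange_bond_def)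
    consider "a = h" | "b = h" | "h \<notin> {a, b}" by blast
    then show ?thesis
    proof cases
      case 1
      then show ?thesis
        using spins_swappable_via_neighbour[OF w] ab \<open>a \<noteq> b\<close> by (simp add: relabel_def)
    next
      case 2
      then have "exchange_bond \<Lambda> t h a" using exchange_bond_sym[OF ab] by simp
      then show ?thesis
        using spins_swappable_via_neighbour[OF w] 2 \<open>a \<noteq> b\<close>
        by (simp add: relabel_def spins_swappable_commute)
    next
      case 3
      then have "relabel a = a" "relabel b = b" by (auto simp: relabel_def)
      then show ?thesis using exchange_bond_swappable[OF ab 3] by simp
    qed
  qed
  have "(\<lambda>a b. exchange_bond \<Lambda> t a b)\<^sup>*\<^sup>* u v"
    using assms unfolding exchange_connected_def by blast
  then have "spins_swappable \<Lambda> t h (relabel u) (relabel v)"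
    by induction (auto intro: spins_swappable_refl spins_swappable_trans bond)
  then show ?thesis using assms(3,4) by (simp add: relabel_def)
qed

lemma Collect_swap_spins:
  "\<sigma> y \<Longrightarrow> \<not> \<sigma> z \<Longrightarrow> Collect (swap_spins \<sigma> y z) = insert z (Collect \<sigma> - {y})"
  by (auto simp: swap_spins_def split: if_splits)

lemma equal_count_connected_by_swaps:
  fixes R :: "('a \<Rightarrow> bool) \<Rightarrow> ('a \<Rightarrow> bool) \<Rightarrow> bool"
  assumes "finite S" "reflp R" "transp R"
    and swap: "\<And>\<sigma> u v. Collect \<sigma> \<subseteq> S \<Longrightarrow> u \<in> S \<Longrightarrow> v \<in> S \<Longrightarrow> R \<sigma> (swap_spins \<sigma> u v)"
    and "Collect \<sigma> \<subseteq> S" "Collect \<sigma>' \<subseteq> S" "card (Collect \<sigma>) = card (Collect \<sigma>')"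
  shows "R \<sigma> \<sigma>'"
  using assms(5-7)
proof (induction "card (Collect \<sigma> - Collect \<sigma>')" arbitrary: \<sigma> rule: less_induct)
  case less
  have fin: "finite (Collect \<sigma>)" "finite (Collect \<sigma>')"
    using less.prems(1,2) assms(1) by (auto intro: finite_subset)
  show ?case
  proof (cases "Collect \<sigma> \<subseteq> Collect \<sigma>'")
    case True
    then have "Collect \<sigma> = Collect \<sigma>'" using card_subset_eq fin(2) less.prems(3) by blast
    then have "\<sigma> = \<sigma>'" by (rule Collect_inj)
    then show ?thesis using assms(2) by (simp add: reflpD)
  next
    case False
    then obtain y where y: "\<sigma> y" "\<not> \<sigma>' y" by auto
    have "\<not> Collect \<sigma>' \<subseteq> Collect \<sigma>"
    proof
      assume "Collect \<sigma>' \<subseteq> Collect \<sigma>"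
      then have "Collect \<sigma>' = Collect \<sigma>" using card_subset_eq[OF fin(1)] less.prems(3) by simp
      with False show False by simp
    qed
    then obtain z where z: "\<sigma>' z" "\<not> \<sigma> z" by auto
    define \<sigma>\<^sub>1 where "\<sigma>\<^sub>1 = swap_spins \<sigma> y z"
    have swapped: "Collect \<sigma>\<^sub>1 = insert z (Collect \<sigma> - {y})"
      unfolding \<sigma>\<^sub>1_def using y(1) z(2) by (rule Collect_swap_spins)
    have "Collect \<sigma>\<^sub>1 \<subseteq> S" "card (Collect \<sigma>\<^sub>1) = card (Collect \<sigma>')"
    proof -
      have "card (Collect \<sigma>) > 0" using y(1) fin(1) card_gt_0_iff by blast
      then show "Collect \<sigma>\<^sub>1 \<subseteq> S" "card (Collect \<sigma>\<^sub>1) = card (Collect \<sigma>')"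
        using swapped less.prems y z fin(1) by (auto simp: card_insert_if)
    qed
    moreover have "card (Collect \<sigma>\<^sub>1 - Collect \<sigma>') < card (Collect \<sigma> - Collect \<sigma>')"
    proof -
      have "Collect \<sigma>\<^sub>1 - Collect \<sigma>' = (Collect \<sigma> - Collect \<sigma>') - {y}" using swapped z by auto
      moreover have "finite (Collect \<sigma> - Collect \<sigma>')" "y \<in> Collect \<sigma> - Collect \<sigma>'"
        using fin(1) y by simp_all
      ultimately show ?thesis by (simp only: card_Diff1_less)
    qed
    ultimately have "R \<sigma>\<^sub>1 \<sigma>'" using less.hyps[of \<sigma>\<^sub>1] less.prems(2) by blast
    moreover have "R \<sigma> \<sigma>\<^sub>1"
      unfolding \<sigma>\<^sub>1_def using swap less.prems y z by blast
    ultimately show ?thesis using assms(3) by (blast dest: transpD)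
  qed
qed

lemma config_reachable_same_hole:
  assumes "finite \<Lambda>" "exchange_connected \<Lambda> t" "(h, \<sigma>) \<in> configs \<Lambda>" "(h, \<sigma>') \<in> configs \<Lambda>"
    and "total_Sz \<Lambda> (h, \<sigma>) = total_Sz \<Lambda> (h, \<sigma>')"
  shows "config_reachable \<Lambda> t (h, \<sigma>) (h, \<sigma>')"
proof -
  have h: "h \<in> \<Lambda>" and occupied: "Collect \<sigma> \<subseteq> \<Lambda> - {h}" "Collect \<sigma>' \<subseteq> \<Lambda> - {h}"
    using assms(3,4) by (auto simp: configs_def)
  have "{y \<in> \<Lambda> - {h}. \<sigma> y} = Collect \<sigma>" "{y \<in> \<Lambda> - {h}. \<sigma>' y} = Collect \<sigma>'"
    using occupied by auto
  then have "card (Collect \<sigma>) = card (Collect \<sigma>')"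
    using assms(5) by (simp add: total_Sz_eq_card[OF assms(1)])
  moreover have "config_reachable \<Lambda> t (h, \<tau>) (h, swap_spins \<tau> u v)"
    if "Collect \<tau> \<subseteq> \<Lambda> - {h}" "u \<in> \<Lambda> - {h}" "v \<in> \<Lambda> - {h}" for \<tau> u v
    using exchange_connected_spins_swappable[OF assms(2) h that(2,3)] that(1) h
    by (auto simp: spins_swappable_def configs_def)
  moreover have "reflp (\<lambda>\<sigma> \<tau>. config_reachable \<Lambda> t (h, \<sigma>) (h, \<tau>))"
    by (simp add: reflpI)
  moreover have "transp (\<lambda>\<sigma> \<tau>. config_reachable \<Lambda> t (h, \<sigma>) (h, \<tau>))"
    by (rule transpI) (rule rtranclp_trans)
  ultimately show ?thesis
    using equal_count_connected_by_swaps[OF _ _ _ _ occupied] assms(1) by blast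
qed

lemma config_reachable_move_hole:
  assumes "hop_connected t \<Lambda>" "c \<in> configs \<Lambda>" "h \<in> \<Lambda>"
  obtains \<tau> where "config_reachable \<Lambda> t c (h, \<tau>)"
proof -
  obtain h' \<sigma>' where c: "c = (h', \<sigma>')" by fastforce
  then have "(hop_edge t \<Lambda>)\<^sup>*\<^sup>* h' h"
    using assms unfolding hop_connected_iff by (auto simp: configs_def)
  then obtain xs where walk: "successively (hop_edge t \<Lambda>) (h' # xs)" "last (h' # xs) = h"
    by (rule rtranclp_imp_successively)
  moreover have "(h', \<sigma>') \<in> configs \<Lambda>" using assms(2) c by simp
  ultimately show thesis
    using config_reachable_hole_walk that unfolding c by metis
qed

theorem mainTheorem6:
  fixes \<Lambda> :: "'a set" and t :: "'a \<Rightarrow> 'a \<Rightarrow> real"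
  assumes "finite \<Lambda>"
    and "\<And>x y. x \<in> \<Lambda> \<Longrightarrow> y \<in> \<Lambda> \<Longrightarrow> t x y = t y x"
    and "exchange_connected \<Lambda> t"
  shows "connectivity_condition \<Lambda> t"
  unfolding connectivity_condition_def
proof (intro ballI impI)
  fix c c' assume c: "c \<in> configs \<Lambda>" and c': "c' \<in> configs \<Lambda>"
    and Sz: "total_Sz \<Lambda> c = total_Sz \<Lambda> c'"
  obtain h \<sigma> where c_def: "c = (h, \<sigma>)" by fastforce
  have "h \<in> \<Lambda>" using c by (simp add: c_def configs_def)
  then obtain \<tau> where c'_to: "config_reachable \<Lambda> t c' (h, \<tau>)"
    using config_reachable_move_hole[OF exchange_connected_hop_connected[OF assms(3)] c'] by blast
  have "(h, \<tau>) \<in> configs \<Lambda>" "total_Sz \<Lambda> (h, \<tau>) = total_Sz \<Lambda> c"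
    using config_reachable_configs[OF c'_to c'] config_reachable_total_Sz[OF assms(1) c'_to] Sz
    by simp_all
  then have "config_reachable \<Lambda> t c (h, \<tau>)"
    using config_reachable_same_hole[OF assms(1,3)] c by (simp add: c_def)
  then have "config_reachable \<Lambda> t c c'"
    using config_reachable_sym[OF c'_to] by (rule rtranclp_trans)
  then show "(\<lambda>a b. config_adjacent \<Lambda> t a b \<and> total_Sz \<Lambda> a = total_Sz \<Lambda> c
      \<and> total_Sz \<Lambda> b = total_Sz \<Lambda> c)\<^sup>*\<^sup>* c c'"
    by (rule config_reachable_in_sector[OF assms(1)])
qed

end
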